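(* Let $H$ be a bigraph. If the pair-digraph $H^+$ has a self-coupled strong component, then $H$ is not an interval bigraph; equivalently, $V(H)$ admits no linear ordering $<$ without three vertices $a<b<c$ such that $a,b$ have the same colour, $c$ has the opposite colour, $ac\in E(H)$ and $bc\notin E(H)$.
   Context: A bigraph is a bipartite graph $H$ with a fixed bipartition $V(H)=B\cup W$ (black and white vertices). $H$ is an interval bigraph if there are intervals $I_v$, $v\in V(H)$, such that for $x\in B$, $y\in W$: $xy\in E(H)$ iff $I_x\cap I_y\neq\emptyset$. By a theorem of Hell and Huang, $H$ is an interval bigraph iff $V(H)$ has a linear ordering $<$ with no $a<b<c$ where $a,b$ have the same colour, $c$ the opposite colour, $ac\in E(H)$, $bc\notin E(H)$. The pair-digraph $H^+$ has vertices all ordered pairs $(u,v)$, $u\ne v$, and arcs $(u,v)\to(u',v)$ whenever $u,v$ have the same colour, $uu'\in E(H)$, $vu'\notin E(H)$, and $(u,v)\to(u,v')$ whenever $u,v$ have different colours, $vv'\in E(H)$, $uv\notin E(H)$. For a set $S$ of vertices of $H^+$, $S'=\{(u,v):(v,u)\in S\}$. A strong component $S$ of $H^+$ is self-coupled if $S=S'$. *)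

theory Defs
  imports Complex_Main
begin

definition bigraph :: "'a set \<Rightarrow> 'a set \<Rightarrow> ('a \<times> 'a) set \<Rightarrow> bool" where
  "bigraph V B E \<longleftrightarrow> finite V \<and> B \<subseteq> V \<and> sym E \<and>
     E \<subseteq> {(x, y). x \<in> V \<and> y \<in> V \<and> (x \<in> B \<longleftrightarrow> y \<notin> B)}"

definition same_colour :: "'a set \<Rightarrow> 'a \<Rightarrow> 'a \<Rightarrow> bool" where
  "same_colour B u v \<longleftrightarrow> (u \<in> B \<longleftrightarrow> v \<in> B)"

definition interval_bigraph :: "'a set \<Rightarrow> 'a set \<Rightarrow> ('a \<times> 'a) set \<Rightarrow> bool" where
  "interval_bigraph V B E \<longleftrightarrow>
     (\<exists>I :: 'a \<Rightarrow> real \<times> real. (\<forall>v\<in>V. fst (I v) \<le> snd (I v)) \<and>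
        (\<forall>x\<in>B. \<forall>y\<in>V - B. (x, y) \<in> E \<longleftrightarrow> {fst (I x)..snd (I x)} \<inter> {fst (I y)..snd (I y)} \<noteq> {}))"

definition good_ordering :: "'a set \<Rightarrow> 'a set \<Rightarrow> ('a \<times> 'a) set \<Rightarrow> ('a \<times> 'a) set \<Rightarrow> bool" where
  "good_ordering V B E r \<longleftrightarrow> r \<subseteq> V \<times> V \<and> strict_linear_order_on V r \<and>
     \<not> (\<exists>a\<in>V. \<exists>b\<in>V. \<exists>c\<in>V. (a, b) \<in> r \<and> (b, c) \<in> r \<and> same_colour B a b \<and>
          \<not> same_colour B a c \<and> (a, c) \<in> E \<and> (b, c) \<notin> E)"

definition pair_vertices :: "'a set \<Rightarrow> ('a \<times> 'a) set" where
  "pair_vertices V = {(u, v). u \<in> V \<and> v \<in> V \<and> u \<noteq> v}"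

definition pair_arcs :: "'a set \<Rightarrow> 'a set \<Rightarrow> ('a \<times> 'a) set \<Rightarrow> (('a \<times> 'a) \<times> ('a \<times> 'a)) set" where
  "pair_arcs V B E =
     {((u, v), (u', v)) | u v u'. (u, v) \<in> pair_vertices V \<and> (u', v) \<in> pair_vertices V \<and>
         same_colour B u v \<and> (u, u') \<in> E \<and> (v, u') \<notin> E}
   \<union> {((u, v), (u, v')) | u v v'. (u, v) \<in> pair_vertices V \<and> (u, v') \<in> pair_vertices V \<and>
         \<not> same_colour B u v \<and> (v, v') \<in> E \<and> (u, v') \<notin> E}"

definition strong_component :: "'b set \<Rightarrow> ('b \<times> 'b) set \<Rightarrow> 'b set \<Rightarrow> bool" where
  "strong_component N A S \<longleftrightarrow> S \<noteq> {} \<and> S \<subseteq> N \<and>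
     (\<forall>x\<in>S. \<forall>y\<in>S. (x, y) \<in> A\<^sup>*) \<and>
     (\<forall>x\<in>S. \<forall>y\<in>N. (x, y) \<in> A\<^sup>* \<and> (y, x) \<in> A\<^sup>* \<longrightarrow> y \<in> S)"

definition swap_set :: "('a \<times> 'a) set \<Rightarrow> ('a \<times> 'a) set" where
  "swap_set S = {(u, v). (v, u) \<in> S}"

definition self_coupled :: "('a \<times> 'a) set \<Rightarrow> bool" where
  "self_coupled S \<longleftrightarrow> S = swap_set S"

end

theory Submission
  imports Defs "HOL-Library.Product_Lexorder"
begin

text \<open>Both conclusions come down to one obstruction. Call a set P of pairs an orientation
  if it is asymmetric, contains (u, v) or (v, u) for any two distinct non-adjacent vertices,
  and is closed under the arcs of the pair-digraph. A self-coupled strong component contains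
  some (a, b) together with (b, a), each reachable from the other; arcs always end in
  non-adjacent pairs, so a and b are non-adjacent, one of the two pairs lies in P, and
  closedness puts the other one there too, contradicting asymmetry. An ordering without the
  forbidden pattern yields an orientation, namely the non-adjacent pairs (u, v) with u < v,
  and an interval representation yields such an ordering: sort the vertices by right
  endpoints.\<close>

lemma pair_arcsE:
  assumes "((u, v), (u', v')) \<in> pair_arcs V B E"
  obtains (same_colour) "v' = v" "u \<in> V" "v \<in> V" "u' \<in> V" "u \<noteq> v" "u' \<noteq> v"
      "same_colour B u v" "(u, u') \<in> E" "(v, u') \<notin> E"
    | (opposite_colour) "u' = u" "u \<in> V" "v \<in> V" "v' \<in> V" "u \<noteq> v" "u \<noteq> v'"
      "\<not> same_colour B u v" "(v, v') \<in> E" "(u, v') \<notin> E"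
  using assms unfolding pair_arcs_def pair_vertices_def by blast

lemma bigraph_edge_opposite_colour:
  assumes "bigraph V B E" "(x, y) \<in> E"
  shows "x \<in> V" "y \<in> V" "\<not> same_colour B x y"
  using assms unfolding bigraph_def same_colour_def by blast+

lemma bigraph_edge_sym:
  assumes "bigraph V B E"
  shows "(x, y) \<in> E \<longleftrightarrow> (y, x) \<in> E"
  using assms unfolding bigraph_def by (blast dest: symD)

lemma pair_arc_target_not_edge:
  assumes "bigraph V B E" "(p, (u, v)) \<in> pair_arcs V B E"
  shows "(u, v) \<notin> E"
proof -
  obtain u0 v0 where "p = (u0, v0)" by fastforce
  with assms(2) have "((u0, v0), (u, v)) \<in> pair_arcs V B E" by simp
  then show ?thesis
    by (cases rule: pair_arcsE) (auto simp: bigraph_edge_sym[OF assms(1)])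
qed

theorem no_self_coupled_component_if_orientation:
  assumes bg: "bigraph V B E"
    and closed: "pair_arcs V B E `` P \<subseteq> P"
    and total: "\<And>u v. u \<in> V \<Longrightarrow> v \<in> V \<Longrightarrow> u \<noteq> v \<Longrightarrow> (u, v) \<notin> E \<Longrightarrow>
      (u, v) \<in> P \<or> (v, u) \<in> P"
    and "asym P"
    and S: "strong_component (pair_vertices V) (pair_arcs V B E) S"
  shows "\<not> self_coupled S"
proof
  assume "self_coupled S"
  obtain a b where "(a, b) \<in> S" using S unfolding strong_component_def by fast
  moreover from this \<open>self_coupled S\<close> have "(b, a) \<in> S"
    unfolding self_coupled_def swap_set_def by blast
  ultimately have ab: "((a, b), (b, a)) \<in> (pair_arcs V B E)\<^sup>*"
      "((b, a), (a, b)) \<in> (pair_arcs V B E)\<^sup>*"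
    and "a \<in> V" "b \<in> V" "a \<noteq> b"
    using S unfolding strong_component_def pair_vertices_def by blast+
  from ab(2) \<open>a \<noteq> b\<close> obtain p where "(p, (a, b)) \<in> pair_arcs V B E"
    by (cases rule: rtranclE) auto
  then have "(a, b) \<notin> E" using pair_arc_target_not_edge[OF bg] by blast
  have reach: "y \<in> P" if "(x, y) \<in> (pair_arcs V B E)\<^sup>*" "x \<in> P" for x y
    using that Image_closed_trancl[OF closed] by blast
  from total[OF \<open>a \<in> V\<close> \<open>b \<in> V\<close> \<open>a \<noteq> b\<close> \<open>(a, b) \<notin> E\<close>]
  have "(a, b) \<in> P \<and> (b, a) \<in> P" using reach ab by blast
  with \<open>asym P\<close> show False by (blast dest: asymD)
qed

lemma good_ordering_arc_closed:
  assumes bg: "bigraph V B E" and r: "good_ordering V B E r"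
  shows "pair_arcs V B E `` (r - E) \<subseteq> r - E"
proof -
  have total: "(x, y) \<in> r \<or> (y, x) \<in> r" if "x \<in> V" "y \<in> V" "x \<noteq> y" for x y
    using r that unfolding good_ordering_def strict_linear_order_on_def total_on_def by blast
  have no_pattern: "\<not> ((a, b) \<in> r \<and> (b, c) \<in> r \<and> same_colour B a b \<and> \<not> same_colour B a c \<and>
      (a, c) \<in> E \<and> (b, c) \<notin> E)" if "a \<in> V" "b \<in> V" "c \<in> V" for a b c
    using r that unfolding good_ordering_def by blast
  have "(u', v') \<in> r - E" if arc: "((u, v), (u', v')) \<in> pair_arcs V B E" and "(u, v) \<in> r - E"
    for u v u' v'
    using arc
  proof (cases rule: pair_arcsE)
    case same_colour
    then have "\<not> same_colour B u u'" using bigraph_edge_opposite_colour[OF bg] by blast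
    then have "(v, u') \<notin> r" using no_pattern[of u v u'] same_colour \<open>(u, v) \<in> r - E\<close> by blast
    then show ?thesis
      using total same_colour pair_arc_target_not_edge[OF bg arc] by blast
  next
    case opposite_colour
    have "(v', v) \<in> E" using opposite_colour bigraph_edge_sym[OF bg] by blast
    then have "\<not> same_colour B v' v" using bigraph_edge_opposite_colour[OF bg] by blast
    then have "(v', u) \<notin> r"
      using no_pattern[of v' u v] opposite_colour \<open>(v', v) \<in> E\<close> \<open>(u, v) \<in> r - E\<close>
      unfolding same_colour_def by blast
    then show ?thesis
      using total opposite_colour pair_arc_target_not_edge[OF bg arc] by blast
  qed
  then show ?thesis by fast
qed

lemma good_ordering_orientation:
  assumes bg: "bigraph V B E" and r: "good_ordering V B E r"
  shows "pair_arcs V B E `` (r - E) \<subseteq> r - E"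
    and "\<And>u v. u \<in> V \<Longrightarrow> v \<in> V \<Longrightarrow> u \<noteq> v \<Longrightarrow> (u, v) \<notin> E \<Longrightarrow> (u, v) \<in> r - E \<or> (v, u) \<in> r - E"
    and "asym (r - E)"
proof -
  have "trans r" "irrefl r" "total_on V r"
    using r unfolding good_ordering_def strict_linear_order_on_def by blast+
  then show "\<And>u v. u \<in> V \<Longrightarrow> v \<in> V \<Longrightarrow> u \<noteq> v \<Longrightarrow> (u, v) \<notin> E \<Longrightarrow> (u, v) \<in> r - E \<or> (v, u) \<in> r - E"
    unfolding total_on_def by (auto simp: bigraph_edge_sym[OF bg])
  have "asym r" using \<open>trans r\<close> \<open>irrefl r\<close> asym_on_iff_irrefl_on_if_trans_on by blast
  then show "asym (r - E)" by (blast dest: asymD)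
qed (fact good_ordering_arc_closed[OF assms])

lemma strict_linear_order_on_key:
  fixes key :: "'a \<Rightarrow> 'b::linorder"
  assumes "inj_on key V"
  shows "strict_linear_order_on V {(u, v). u \<in> V \<and> v \<in> V \<and> key u < key v}"
  unfolding strict_linear_order_on_def trans_def irrefl_def total_on_def
  using inj_on_contraD[OF assms] by (auto simp: neq_iff)

lemma interval_bigraph_imp_good_ordering:
  assumes bg: "bigraph V B E" and "interval_bigraph V B E"
  shows "\<exists>r. good_ordering V B E r"
proof -
  obtain I :: "'a \<Rightarrow> real \<times> real" where I: "\<forall>v\<in>V. fst (I v) \<le> snd (I v)"
    and IE: "\<forall>x\<in>B. \<forall>y\<in>V - B. (x, y) \<in> E \<longleftrightarrow> {fst (I x)..snd (I x)} \<inter> {fst (I y)..snd (I y)} \<noteq> {}"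
    using \<open>interval_bigraph V B E\<close> unfolding interval_bigraph_def by blast
  define L where "L v = fst (I v)" for v
  define R where "R v = snd (I v)" for v
  have edge: "(x, y) \<in> E \<longleftrightarrow> L x \<le> R y \<and> L y \<le> R x"
    if "x \<in> V" "y \<in> V" "\<not> same_colour B x y" for x y
    using that I IE bigraph_edge_sym[OF bg, of x y] unfolding L_def R_def same_colour_def
    by (cases "x \<in> B") auto
  obtain f :: "'a \<Rightarrow> nat" where "inj_on f V"
    using bg finite_imp_inj_to_nat_seg unfolding bigraph_def by meson
  define key where "key v = (R v, f v)" for v
  define r where "r = {(u, v). u \<in> V \<and> v \<in> V \<and> key u < key v}"
  have "inj_on key V" using \<open>inj_on f V\<close> unfolding key_def inj_on_def by simp
  have right_endpoint_mono: "R u \<le> R v" if "(u, v) \<in> r" for u v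
    using that unfolding r_def key_def by (auto simp: less_prod_def)
  have "\<not> ((a, b) \<in> r \<and> (b, c) \<in> r \<and> same_colour B a b \<and> \<not> same_colour B a c \<and>
      (a, c) \<in> E \<and> (b, c) \<notin> E)" if "a \<in> V" "b \<in> V" "c \<in> V" for a b c
  proof
    assume pattern: "(a, b) \<in> r \<and> (b, c) \<in> r \<and> same_colour B a b \<and> \<not> same_colour B a c \<and>
      (a, c) \<in> E \<and> (b, c) \<notin> E"
    then have "\<not> same_colour B b c" unfolding same_colour_def by blast
    then have "R b < L c \<or> R c < L b" using edge[of b c] pattern that by auto
    moreover have "L c \<le> R a" using edge[of a c] pattern that by blast
    moreover have "L b \<le> R b" using I \<open>b \<in> V\<close> unfolding L_def R_def by blast
    ultimately show False using right_endpoint_mono pattern by force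
  qed
  moreover have "strict_linear_order_on V r"
    unfolding r_def using \<open>inj_on key V\<close> by (rule strict_linear_order_on_key)
  ultimately have "good_ordering V B E r" unfolding good_ordering_def r_def by blast
  then show ?thesis by blast
qed

theorem lemma2p3:
  fixes V B :: "'a set" and E :: "('a \<times> 'a) set"
  assumes "bigraph V B E"
    and "\<exists>S. strong_component (pair_vertices V) (pair_arcs V B E) S \<and> self_coupled S"
  shows "\<not> interval_bigraph V B E \<and> \<not> (\<exists>r. good_ordering V B E r)"
proof -
  have "\<not> (\<exists>r. good_ordering V B E r)"
    using assms no_self_coupled_component_if_orientation good_ordering_orientation by metis
  then show ?thesis using interval_bigraph_imp_good_ordering[OF assms(1)] by blast
qed

end
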